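(* A domain $R$ is a Prüfer $v$-multiplication domain (P$v$MD) if and only if every nonzero finitely generated ideal of $R$ is $w$-basic.
   Context: For a domain $R$ with quotient field $K$ and nonzero fractional ideal $I$: $I^{-1}=(R:I)=\{x\in K:xI\subseteq R\}$, $I_v=(I^{-1})^{-1}$, $I_t=\bigcup J_v$ over finitely generated subideals $J\subseteq I$; $I$ is a $t$-ideal if $I_t=I$; a maximal $t$-ideal is an ideal maximal among proper integral $t$-ideals. The $w$-operation is $I_w=\bigcup (I:J)$ over finitely generated ideals $J$ of $R$ with $J_v=R$ (equivalently $I_w=\bigcap_M IR_M$ over maximal $t$-ideals $M$). $R$ is a P$v$MD if every nonzero finitely generated ideal $I$ is $t$-invertible, i.e. $(II^{-1})_t=R$ (equivalently, $R_M$ is a valuation domain for each maximal $t$-ideal $M$). For a nonzero ideal $I$, an ideal $J\subseteq I$ is a $w$-reduction of $I$ if $(JI^n)_w=(I^{n+1})_w$ for some integer $n\ge0$; $I$ is $w$-basic if every $w$-reduction $J$ of $I$ satisfies $J_w=I_w$. *)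

theory Defs
  imports "HOL-Computational_Algebra.Fraction_Field"
begin

text \<open>The domain R is the type 'a (class idom); its quotient field K is the type 'a fract.
  R is identified with its image in K under a |-> a/1.  Fractional ideals and
  integral ideals are represented as subsets of K.\<close>

definition Rset :: "'a::idom fract set" where
  "Rset = (\<lambda>a. Fract a 1) ` UNIV"

definition Rsubmod :: "'a::idom fract set \<Rightarrow> bool" where
  "Rsubmod M \<longleftrightarrow> 0 \<in> M \<and> (\<forall>x\<in>M. \<forall>y\<in>M. x + y \<in> M) \<and> (\<forall>r\<in>Rset. \<forall>x\<in>M. r * x \<in> M)"

definition Rspan :: "'a::idom fract set \<Rightarrow> 'a fract set" where
  "Rspan S = \<Inter>{M. Rsubmod M \<and> S \<subseteq> M}"

definition setmult :: "'a::idom fract set \<Rightarrow> 'a fract set \<Rightarrow> 'a fract set" where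
  "setmult A B = Rspan {a * b | a b. a \<in> A \<and> b \<in> B}"

fun ipow :: "'a::idom fract set \<Rightarrow> nat \<Rightarrow> 'a fract set" where
  "ipow I 0 = Rset"
| "ipow I (Suc n) = setmult I (ipow I n)"

definition colon :: "'a::idom fract set \<Rightarrow> 'a fract set \<Rightarrow> 'a fract set" where
  "colon A B = {x. \<forall>b\<in>B. x * b \<in> A}"

definition finv :: "'a::idom fract set \<Rightarrow> 'a fract set" where
  "finv I = colon Rset I"

definition vop :: "'a::idom fract set \<Rightarrow> 'a fract set" where
  "vop I = finv (finv I)"

definition int_ideal :: "'a::idom fract set \<Rightarrow> bool" where
  "int_ideal I \<longleftrightarrow> Rsubmod I \<and> I \<subseteq> Rset"

definition fg_ideal :: "'a::idom fract set \<Rightarrow> bool" where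
  "fg_ideal I \<longleftrightarrow> (\<exists>F. finite F \<and> F \<subseteq> Rset \<and> I = Rspan F)"

definition tclos :: "'a::idom fract set \<Rightarrow> 'a fract set" where
  "tclos I = \<Union>{vop J | J. fg_ideal J \<and> J \<subseteq> I}"

definition wop :: "'a::idom fract set \<Rightarrow> 'a fract set" where
  "wop I = \<Union>{colon I J | J. fg_ideal J \<and> vop J = Rset}"

definition PvMD :: "'a::idom itself \<Rightarrow> bool" where
  "PvMD _ \<longleftrightarrow> (\<forall>I :: 'a fract set. fg_ideal I \<and> I \<noteq> {0} \<longrightarrow> tclos (setmult I (finv I)) = Rset)"

definition w_reduction :: "'a::idom fract set \<Rightarrow> 'a fract set \<Rightarrow> bool" where
  "w_reduction J I \<longleftrightarrow> int_ideal J \<and> J \<subseteq> I \<and>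
     (\<exists>n. wop (setmult J (ipow I n)) = wop (ipow I (Suc n)))"

definition w_basic :: "'a::idom fract set \<Rightarrow> bool" where
  "w_basic I \<longleftrightarrow> (\<forall>J. w_reduction J I \<longrightarrow> wop J = wop I)"

end

theory Submission
  imports Defs
begin

text \<open>A nonzero finitely generated ideal \<open>I\<close> is \<open>t\<close>-invertible exactly when \<open>I I\<^sup>-\<^sup>1\<close> contains
  a GV-ideal, i.e. a finitely generated ideal \<open>H\<close> with \<open>H\<^sub>v = R\<close>.
  If \<open>R\<close> is a P\<open>v\<close>MD and \<open>(J I\<^sup>n)\<^sub>w = (I\<^sup>n\<^sup>+\<^sup>1)\<^sub>w\<close>, multiplying by \<open>(I\<^sup>n)\<^sup>-\<^sup>1\<close> and by a GV-ideal
  inside \<open>I\<^sup>n (I\<^sup>n)\<^sup>-\<^sup>1\<close> cancels \<open>I\<^sup>n\<close> up to \<open>w\<close>-closure, so \<open>I\<^sub>w \<subseteq> J\<^sub>w\<close>.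
  Conversely, for nonzero \<open>a, b\<close> the ideal \<open>(a\<^sup>2, b\<^sup>2)\<close> is a reduction of \<open>(a\<^sup>2, ab, b\<^sup>2)\<close>, so
  \<open>w\<close>-basicness yields a GV-ideal \<open>H\<close> with \<open>ab h = r a\<^sup>2 + s b\<^sup>2\<close> for \<open>h \<in> H\<close>. Then \<open>e = ra/b\<close> and
  \<open>f = sb/a\<close> satisfy \<open>e + f = h\<close>, \<open>ef = rs\<close>, and \<open>w\<close>-basicness of \<open>(b, be)\<close> forces \<open>e, f \<in> R\<close>;
  hence \<open>H \<subseteq> (a, b)(a, b)\<^sup>-\<^sup>1\<close>. Products of such GV-ideals give the general case by induction
  on the number of generators.\<close>

lemma Rset_iff: "x \<in> Rset \<longleftrightarrow> (\<exists>a. x = Fract a 1)"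
  unfolding Rset_def by auto

lemma Rset_add: "x \<in> Rset \<Longrightarrow> y \<in> Rset \<Longrightarrow> x + y \<in> Rset"
  unfolding Rset_iff by (auto intro: exI[of _ "_ + _"])

lemma Rset_mult: "x \<in> Rset \<Longrightarrow> y \<in> Rset \<Longrightarrow> x * y \<in> Rset"
  unfolding Rset_iff by (auto intro: exI[of _ "_ * _"])

lemma Rset_0: "0 \<in> Rset" and Rset_1: "1 \<in> Rset"
  unfolding Rset_iff by (auto simp: Zero_fract_def One_fract_def)

lemma Rset_uminus: "x \<in> Rset \<Longrightarrow> - x \<in> Rset"
  unfolding Rset_iff by (auto intro: exI[of _ "- _"])

lemma Rset_diff: "x \<in> Rset \<Longrightarrow> y \<in> Rset \<Longrightarrow> x - y \<in> Rset"
  using Rset_add[of x "- y"] Rset_uminus by auto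

lemma Rsubmod_Rset: "Rsubmod Rset"
  unfolding Rsubmod_def using Rset_0 Rset_add Rset_mult by blast

lemma Rsubmod_zero: "Rsubmod {0}"
  unfolding Rsubmod_def by simp

lemma Rsubmod_0: "Rsubmod M \<Longrightarrow> 0 \<in> M"
  unfolding Rsubmod_def by blast

lemma Rsubmod_add: "Rsubmod M \<Longrightarrow> x \<in> M \<Longrightarrow> y \<in> M \<Longrightarrow> x + y \<in> M"
  unfolding Rsubmod_def by blast

lemma Rsubmod_smult: "Rsubmod M \<Longrightarrow> r \<in> Rset \<Longrightarrow> x \<in> M \<Longrightarrow> r * x \<in> M"
  unfolding Rsubmod_def by blast

lemma Rsubmod_diff:
  assumes "Rsubmod M" "x \<in> M" "y \<in> M"
  shows "x - y \<in> M"
proof -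
  have "(- 1) * y \<in> M" using assms Rsubmod_smult Rset_uminus[OF Rset_1] by blast
  then show ?thesis using assms Rsubmod_add by (metis diff_conv_add_uminus mult_minus1)
qed

lemma Rsubmod_premult: "Rsubmod M \<Longrightarrow> Rsubmod {z. x * z \<in> M}"
  unfolding Rsubmod_def by (auto simp: distrib_left mult.left_commute)

lemma Rsubmod_Rspan: "Rsubmod (Rspan S)"
  unfolding Rspan_def Rsubmod_def by auto

lemma Rspan_superset: "S \<subseteq> Rspan S"
  unfolding Rspan_def by auto

lemma Rspan_base: "x \<in> S \<Longrightarrow> x \<in> Rspan S"
  using Rspan_superset by blast

lemma Rspan_least: "Rsubmod M \<Longrightarrow> S \<subseteq> M \<Longrightarrow> Rspan S \<subseteq> M"
  unfolding Rspan_def by auto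

lemma Rspan_mono: "S \<subseteq> T \<Longrightarrow> Rspan S \<subseteq> Rspan T"
  by (meson Rspan_least Rspan_superset Rsubmod_Rspan order_trans)

lemma mult_Rspan_mem:
  assumes "Rsubmod M" "\<forall>s\<in>S. x * s \<in> M" "y \<in> Rspan S"
  shows "x * y \<in> M"
proof -
  have "Rspan S \<subseteq> {z. x * z \<in> M}"
    using assms(2) by (intro Rspan_least[OF Rsubmod_premult[OF assms(1)]]) auto
  then show ?thesis using assms(3) by auto
qed

lemma Rspan_empty: "Rspan {} = {0}"
  using Rspan_least[OF Rsubmod_zero] Rsubmod_0[OF Rsubmod_Rspan] by blast

lemma Rspan_Diff_zero: "Rspan (S - {0}) = Rspan S"
proof (rule antisym)
  show "Rspan S \<subseteq> Rspan (S - {0})"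
    using Rspan_superset[of "S - {0}"] Rsubmod_0[OF Rsubmod_Rspan]
    by (intro Rspan_least[OF Rsubmod_Rspan]) blast
qed (simp add: Rspan_mono Diff_subset)

lemma Rspan_1: "Rspan {1} = (Rset :: 'a::idom fract set)"
proof (rule antisym)
  show "Rset \<subseteq> (Rspan {1} :: 'a fract set)"
    using Rsubmod_smult[OF Rsubmod_Rspan, of _ 1 "{1}"] Rspan_superset by fastforce
qed (use Rspan_least[OF Rsubmod_Rset] Rset_1 in auto)

lemma Rspan_singleton: "Rspan {x :: 'a::idom fract} = {r * x | r. r \<in> Rset}"
proof (rule antisym)
  show "Rspan {x} \<subseteq> {r * x | r. r \<in> Rset}"
  proof (rule Rspan_least)
    show "Rsubmod {r * x | r. r \<in> Rset}"
      unfolding Rsubmod_def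
    proof (intro conjI ballI)
      show "0 \<in> {r * x | r. r \<in> Rset}" using Rset_0 by force
    next
      fix u v :: "'a fract" assume "u \<in> {r * x | r. r \<in> Rset}" "v \<in> {r * x | r. r \<in> Rset}"
      then obtain r s where "r \<in> Rset" "s \<in> Rset" "u + v = (r + s) * x"
        by (auto simp: distrib_right)
      then show "u + v \<in> {r * x | r. r \<in> Rset}" using Rset_add by blast
    next
      fix t u :: "'a fract" assume "t \<in> Rset" "u \<in> {r * x | r. r \<in> Rset}"
      then obtain r where "r \<in> Rset" "t * u = (t * r) * x"
        by (auto simp: mult.assoc)
      then show "t * u \<in> {r * x | r. r \<in> Rset}" using Rset_mult \<open>t \<in> Rset\<close> by blast
    qed
  qed (use Rset_1 in force)
qed (use Rsubmod_smult[OF Rsubmod_Rspan] Rspan_superset in blast)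

lemma Rspan_pair_subset:
  "Rspan {x :: 'a::idom fract, y} \<subseteq> {r * x + s * y | r s. r \<in> Rset \<and> s \<in> Rset}"
proof (rule Rspan_least)
  show "Rsubmod {r * x + s * y | r s. r \<in> Rset \<and> s \<in> Rset}"
    unfolding Rsubmod_def
  proof (intro conjI ballI)
    show "0 \<in> {r * x + s * y | r s. r \<in> Rset \<and> s \<in> Rset}"
      using Rset_0 by force
  next
    fix u v :: "'a fract" assume "u \<in> {r * x + s * y | r s. r \<in> Rset \<and> s \<in> Rset}"
      "v \<in> {r * x + s * y | r s. r \<in> Rset \<and> s \<in> Rset}"
    then obtain r s r' s' where "r \<in> Rset" "s \<in> Rset" "r' \<in> Rset" "s' \<in> Rset"
      and "u + v = (r + r') * x + (s + s') * y"
      by (auto simp: algebra_simps)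
    then show "u + v \<in> {r * x + s * y | r s. r \<in> Rset \<and> s \<in> Rset}"
      using Rset_add by blast
  next
    fix t u :: "'a fract" assume "t \<in> Rset" "u \<in> {r * x + s * y | r s. r \<in> Rset \<and> s \<in> Rset}"
    then obtain r s where "r \<in> Rset" "s \<in> Rset" and "t * u = (t * r) * x + (t * s) * y"
      by (auto simp: algebra_simps)
    then show "t * u \<in> {r * x + s * y | r s. r \<in> Rset \<and> s \<in> Rset}"
      using Rset_mult \<open>t \<in> Rset\<close> by blast
  qed
  have "x = 1 * x + 0 * y" "y = 0 * x + 1 * y" by simp_all
  then show "{x, y} \<subseteq> {r * x + s * y | r s. r \<in> Rset \<and> s \<in> Rset}"
    using Rset_0 Rset_1 by blast
qed

lemma setmult_mem: "a \<in> A \<Longrightarrow> b \<in> B \<Longrightarrow> a * b \<in> setmult A B"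
  unfolding setmult_def by (rule Rspan_base) blast

lemma Rsubmod_setmult: "Rsubmod (setmult A B)"
  unfolding setmult_def by (rule Rsubmod_Rspan)

lemma setmult_least:
  "Rsubmod M \<Longrightarrow> (\<And>a b. a \<in> A \<Longrightarrow> b \<in> B \<Longrightarrow> a * b \<in> M) \<Longrightarrow> setmult A B \<subseteq> M"
  unfolding setmult_def by (rule Rspan_least) blast+

lemma setmult_mono: "A \<subseteq> A' \<Longrightarrow> B \<subseteq> B' \<Longrightarrow> setmult A B \<subseteq> setmult A' B'"
  by (rule setmult_least[OF Rsubmod_setmult]) (blast intro: setmult_mem)

lemma setmult_Rspan_subset:
  assumes M: "Rsubmod M" and AB: "\<And>a b. a \<in> A \<Longrightarrow> b \<in> B \<Longrightarrow> a * b \<in> M"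
  shows "setmult (Rspan A) (Rspan B) \<subseteq> M"
proof (rule setmult_least[OF M])
  fix x y assume x: "x \<in> Rspan A" and y: "y \<in> Rspan B"
  have "a * y \<in> M" if "a \<in> A" for a
    using mult_Rspan_mem[OF M _ y] AB[OF that] by blast
  then have "\<forall>a\<in>A. y * a \<in> M"
    by (simp add: mult.commute)
  then have "y * x \<in> M"
    using mult_Rspan_mem[OF M _ x] by blast
  then show "x * y \<in> M"
    by (simp add: mult.commute)
qed

lemma setmult_Rspan: "setmult (Rspan A) (Rspan B) = Rspan {a * b | a b. a \<in> A \<and> b \<in> B}"
proof (rule antisym)
  show "setmult (Rspan A) (Rspan B) \<subseteq> Rspan {a * b | a b. a \<in> A \<and> b \<in> B}"
    by (rule setmult_Rspan_subset[OF Rsubmod_Rspan], rule Rspan_base) blast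
  have "a * b \<in> setmult (Rspan A) (Rspan B)" if "a \<in> A" "b \<in> B" for a b
    using setmult_mem[OF Rspan_base Rspan_base] that .
  then show "Rspan {a * b | a b. a \<in> A \<and> b \<in> B} \<subseteq> setmult (Rspan A) (Rspan B)"
    by (intro Rspan_least[OF Rsubmod_setmult]) blast
qed

lemma setmult_subset_left:
  assumes "Rsubmod X" "Y \<subseteq> Rset"
  shows "setmult X Y \<subseteq> X"
proof (rule setmult_least[OF assms(1)])
  fix a b assume "a \<in> X" "b \<in> Y"
  then have "b * a \<in> X" using assms Rsubmod_smult by blast
  then show "a * b \<in> X" by (simp add: mult.commute)
qed

lemma setmult_subset_right:
  assumes "Rsubmod Y" "X \<subseteq> Rset"
  shows "setmult X Y \<subseteq> Y"
proof (rule setmult_least[OF assms(1)])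
  fix a b assume "a \<in> X" "b \<in> Y"
  then show "a * b \<in> Y" using assms Rsubmod_smult by blast
qed

lemma setmult_Rset:
  assumes "Rsubmod X"
  shows "setmult X Rset = X"
proof (rule antisym)
  show "X \<subseteq> setmult X Rset"
    using setmult_mem[OF _ Rset_1, of _ X] by (simp add: subset_iff)
qed (rule setmult_subset_left[OF assms subset_refl])

lemma setmult_subset_Rset: "A \<subseteq> Rset \<Longrightarrow> B \<subseteq> Rset \<Longrightarrow> setmult A B \<subseteq> Rset"
  by (rule setmult_least[OF Rsubmod_Rset]) (meson Rset_mult subsetD)

lemma fg_idealI: "finite F \<Longrightarrow> F \<subseteq> Rset \<Longrightarrow> fg_ideal (Rspan F)"
  unfolding fg_ideal_def by blast

lemma fg_ideal_subset_Rset: "fg_ideal G \<Longrightarrow> G \<subseteq> Rset"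
  unfolding fg_ideal_def using Rspan_least[OF Rsubmod_Rset] by blast

lemma fg_ideal_Rsubmod: "fg_ideal G \<Longrightarrow> Rsubmod G"
  unfolding fg_ideal_def using Rsubmod_Rspan by blast

lemma fg_ideal_int_ideal: "fg_ideal G \<Longrightarrow> int_ideal G"
  unfolding int_ideal_def using fg_ideal_subset_Rset fg_ideal_Rsubmod by blast

lemma fg_ideal_Rset: "fg_ideal (Rset :: 'a::idom fract set)"
  unfolding fg_ideal_def using Rspan_1 Rset_1 by (intro exI[of _ "{1}"]) auto

lemma fg_ideal_setmult:
  assumes "fg_ideal A" "fg_ideal B"
  shows "fg_ideal (setmult A B)"
proof -
  obtain FA FB where FA: "finite FA" "FA \<subseteq> Rset" "A = Rspan FA"
    and FB: "finite FB" "FB \<subseteq> Rset" "B = Rspan FB"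
    using assms unfolding fg_ideal_def by blast
  have "finite {a * b | a b. a \<in> FA \<and> b \<in> FB}"
    by (rule finite_image_set2) (use FA(1) FB(1) in simp_all)
  moreover have "{a * b | a b. a \<in> FA \<and> b \<in> FB} \<subseteq> Rset"
    using FA(2) FB(2) Rset_mult by blast
  ultimately show ?thesis
    unfolding FA(3) FB(3) setmult_Rspan by (rule fg_idealI)
qed

lemma fg_ideal_ipow: "fg_ideal I \<Longrightarrow> fg_ideal (ipow I n)"
  by (induction n) (simp_all add: fg_ideal_Rset fg_ideal_setmult)

lemma power_mem_ipow: "a \<in> I \<Longrightarrow> a ^ n \<in> ipow I n"
  by (induction n) (simp_all add: Rset_1 setmult_mem)

subsection \<open>Inverses and GV-ideals\<close>

lemma Rsubmod_colon: "Rsubmod M \<Longrightarrow> Rsubmod (colon M X)"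
  unfolding Rsubmod_def colon_def by (auto simp: distrib_right mult.assoc)

lemma Rsubmod_finv: "Rsubmod (finv X)"
  unfolding finv_def by (rule Rsubmod_colon[OF Rsubmod_Rset])

lemma finv_antimono: "X \<subseteq> Y \<Longrightarrow> finv Y \<subseteq> finv X"
  unfolding finv_def colon_def by blast

lemma subset_finv_finv: "X \<subseteq> finv (finv X)"
  unfolding finv_def colon_def by (auto simp: mult.commute)

lemma finv_Rset: "finv Rset = (Rset :: 'a::idom fract set)"
  unfolding finv_def colon_def using Rset_1 Rset_mult by fastforce

lemma Rset_subset_finv: "G \<subseteq> Rset \<Longrightarrow> Rset \<subseteq> finv G"
  using finv_antimono[of G Rset] finv_Rset by blast

lemma vop_subset_Rset: "G \<subseteq> Rset \<Longrightarrow> vop G \<subseteq> Rset"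
  unfolding vop_def using finv_antimono[OF Rset_subset_finv] finv_Rset by blast

lemma vop_eq_Rset_if_one_mem:
  assumes "G \<subseteq> Rset" "1 \<in> vop G"
  shows "vop G = Rset"
proof (rule antisym)
  show "Rset \<subseteq> vop G"
    using Rsubmod_smult[OF Rsubmod_finv _ assms(2)[unfolded vop_def]] unfolding vop_def
    by (metis mult.right_neutral subsetI)
qed (rule vop_subset_Rset[OF assms(1)])

lemma finv_eq_Rset_if_vop_eq_Rset:
  assumes "G \<subseteq> Rset" "vop G = Rset"
  shows "finv G = Rset"
proof (rule antisym)
  have "finv G \<subseteq> finv (finv (finv G))"
    by (rule subset_finv_finv)
  then show "finv G \<subseteq> Rset"
    using assms(2) unfolding vop_def by (simp add: finv_Rset)
qed (rule Rset_subset_finv[OF assms(1)])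

definition is_GV :: "'a::idom fract set \<Rightarrow> bool" where
  "is_GV G \<longleftrightarrow> fg_ideal G \<and> vop G = Rset"

lemma is_GV_Rset: "is_GV (Rset :: 'a::idom fract set)"
  unfolding is_GV_def vop_def by (simp add: fg_ideal_Rset finv_Rset)

lemma finv_GV: "is_GV G \<Longrightarrow> finv G = Rset"
  unfolding is_GV_def by (simp add: finv_eq_Rset_if_vop_eq_Rset fg_ideal_subset_Rset)

lemma is_GV_setmult:
  assumes A: "is_GV A" and B: "is_GV B"
  shows "is_GV (setmult A B)"
proof -
  have AB: "setmult A B \<subseteq> Rset"
    using A B unfolding is_GV_def by (simp add: setmult_subset_Rset fg_ideal_subset_Rset)
  have "finv (setmult A B) \<subseteq> Rset"
  proof
    fix x assume x: "x \<in> finv (setmult A B)"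
    have "x * b \<in> Rset" if "b \<in> B" for b
    proof -
      have "x * (a * b) \<in> Rset" if "a \<in> A" for a
        using x setmult_mem[OF that \<open>b \<in> B\<close>] unfolding finv_def colon_def by blast
      then have "x * b \<in> finv A" unfolding finv_def colon_def by (simp add: ac_simps)
      then show ?thesis using finv_GV[OF A] by simp
    qed
    then have "x \<in> finv B"
      unfolding finv_def colon_def by blast
    then show "x \<in> Rset" using finv_GV[OF B] by simp
  qed
  then have "finv (setmult A B) = Rset"
    using Rset_subset_finv[OF AB] by (rule antisym)
  then show ?thesis
    using A B unfolding is_GV_def vop_def by (simp add: fg_ideal_setmult finv_Rset)
qed

lemma setmult_GV_subset:
  assumes "is_GV A" "is_GV B"
  shows "setmult A B \<subseteq> A" "setmult A B \<subseteq> B"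
proof -
  have "Rsubmod A" "Rsubmod B" "A \<subseteq> Rset" "B \<subseteq> Rset"
    using assms unfolding is_GV_def by (simp_all add: fg_ideal_Rsubmod fg_ideal_subset_Rset)
  then show "setmult A B \<subseteq> A" "setmult A B \<subseteq> B"
    by (simp_all add: setmult_subset_left setmult_subset_right)
qed

lemma GV_lower_bound:
  assumes "finite S" "\<forall>k\<in>S. is_GV (G k)"
  shows "\<exists>Q. is_GV Q \<and> (\<forall>k\<in>S. Q \<subseteq> G k)"
  using assms
proof (induction S rule: finite_induct)
  case empty
  then show ?case using is_GV_Rset by blast
next
  case (insert k S)
  then obtain Q where Q: "is_GV Q" "\<forall>k\<in>S. Q \<subseteq> G k" by auto
  have Gk: "is_GV (G k)" using insert.prems by simp
  have "is_GV (setmult (G k) Q)"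
    using is_GV_setmult[OF Gk Q(1)] .
  moreover have "setmult (G k) Q \<subseteq> G k" "setmult (G k) Q \<subseteq> Q"
    using setmult_GV_subset[OF Gk Q(1)] by simp_all
  ultimately show ?case using Q(2) by blast
qed

subsection \<open>The \<open>w\<close>-operation\<close>

lemma wop_iff: "x \<in> wop M \<longleftrightarrow> (\<exists>G. is_GV G \<and> (\<forall>g\<in>G. x * g \<in> M))"
  unfolding wop_def colon_def is_GV_def by blast

lemma wop_mono: "M \<subseteq> N \<Longrightarrow> wop M \<subseteq> wop N"
  unfolding wop_def colon_def by blast

lemma subset_wop:
  assumes "Rsubmod M"
  shows "M \<subseteq> wop M"
proof
  fix x assume "x \<in> M"
  then have "\<forall>g\<in>Rset. x * g \<in> M"
    using Rsubmod_smult[OF assms] by (simp add: mult.commute)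
  then show "x \<in> wop M" unfolding wop_iff using is_GV_Rset by blast
qed

lemma Rsubmod_wop:
  fixes M :: "'a::idom fract set"
  assumes M: "Rsubmod M"
  shows "Rsubmod (wop M)"
  unfolding Rsubmod_def
proof (intro conjI ballI)
  show "0 \<in> wop M" using subset_wop[OF M] Rsubmod_0[OF M] by blast
next
  fix x y assume "x \<in> wop M" "y \<in> wop M"
  then obtain A B where A: "is_GV A" "\<forall>g\<in>A. x * g \<in> M" and B: "is_GV B" "\<forall>g\<in>B. y * g \<in> M"
    unfolding wop_iff by blast
  have "(x + y) * g \<in> M" if "g \<in> setmult A B" for g
  proof -
    have "x * g \<in> M" "y * g \<in> M"
      using that setmult_GV_subset[OF A(1) B(1)] A(2) B(2) by blast+
    then show ?thesis using Rsubmod_add[OF M] by (simp add: distrib_right)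
  qed
  then show "x + y \<in> wop M"
    unfolding wop_iff using is_GV_setmult[OF A(1) B(1)] by blast
next
  fix r x :: "'a fract" assume r: "r \<in> Rset" and "x \<in> wop M"
  then obtain A where A: "is_GV A" "\<forall>g\<in>A. x * g \<in> M" unfolding wop_iff by blast
  then have "\<forall>g\<in>A. r * x * g \<in> M"
    using Rsubmod_smult[OF M r] by (simp add: mult.assoc)
  then show "r * x \<in> wop M"
    unfolding wop_iff using A(1) by blast
qed

text \<open>If \<open>x G \<subseteq> M\<^sub>w\<close> with \<open>G\<close> generated by \<open>F\<close>, the GV-ideals witnessing \<open>x f \<in> M\<^sub>w\<close>
  for \<open>f \<in> F\<close> have a common GV-subideal \<open>Q\<close>, and then \<open>G Q\<close> witnesses \<open>x \<in> M\<^sub>w\<close>.\<close>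

lemma wop_wop:
  assumes M: "Rsubmod M"
  shows "wop (wop M) = wop M"
proof (rule antisym)
  show "wop (wop M) \<subseteq> wop M"
  proof
    fix x assume "x \<in> wop (wop M)"
    then obtain G where G: "is_GV G" "\<forall>g\<in>G. x * g \<in> wop M" unfolding wop_iff by blast
    obtain F where F: "finite F" "G = Rspan F"
      using G(1) unfolding is_GV_def fg_ideal_def by blast
    have "\<forall>f\<in>F. \<exists>H. is_GV H \<and> (\<forall>h\<in>H. x * f * h \<in> M)"
      using G(2) F(2) Rspan_base unfolding wop_iff by blast
    then obtain H where H: "\<forall>f\<in>F. is_GV (H f) \<and> (\<forall>h\<in>H f. x * f * h \<in> M)"
      by metis
    obtain Q where Q: "is_GV Q" "\<forall>f\<in>F. Q \<subseteq> H f"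
      using GV_lower_bound[OF F(1), of H] H by blast
    have "setmult G Q \<subseteq> {z. x * z \<in> M}"
    proof (rule setmult_least[OF Rsubmod_premult[OF M]])
      fix g q assume g: "g \<in> G" and q: "q \<in> Q"
      have "\<forall>f\<in>F. x * f * q \<in> M"
        using H Q(2) q by blast
      then have "\<forall>f\<in>F. (x * q) * f \<in> M"
        by (simp add: ac_simps)
      then have "(x * q) * g \<in> M" using mult_Rspan_mem[OF M] g F(2) by blast
      then show "g * q \<in> {z. x * z \<in> M}" by (simp add: ac_simps)
    qed
    then show "x \<in> wop M"
      unfolding wop_iff using is_GV_setmult[OF G(1) Q(1)] by blast
  qed
qed (rule subset_wop[OF Rsubmod_wop[OF M]])

lemma wop_Rset: "wop Rset = (Rset :: 'a::idom fract set)"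
proof (rule antisym)
  show "wop Rset \<subseteq> (Rset :: 'a fract set)"
  proof
    fix x :: "'a fract" assume "x \<in> wop Rset"
    then obtain G where "is_GV G" "x \<in> finv G"
      unfolding wop_iff finv_def colon_def by blast
    then show "x \<in> Rset" using finv_GV by blast
  qed
qed (rule subset_wop[OF Rsubmod_Rset])

lemma tclos_subset_Rset: "tclos M \<subseteq> Rset"
proof
  fix x assume "x \<in> tclos M"
  then obtain J where "fg_ideal J" "x \<in> vop J"
    unfolding tclos_def by blast
  then show "x \<in> Rset" using vop_subset_Rset[OF fg_ideal_subset_Rset] by blast
qed

lemma tclos_eq_Rset_iff: "tclos M = Rset \<longleftrightarrow> (\<exists>H. is_GV H \<and> H \<subseteq> M)"
proof
  assume "tclos M = Rset"
  then have "1 \<in> tclos M" using Rset_1 by simp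
  then obtain H where H: "fg_ideal H" "H \<subseteq> M" "1 \<in> vop H"
    unfolding tclos_def by blast
  then have "is_GV H"
    unfolding is_GV_def using vop_eq_Rset_if_one_mem[OF fg_ideal_subset_Rset[OF H(1)] H(3)] by simp
  then show "\<exists>H. is_GV H \<and> H \<subseteq> M" using H(2) by blast
next
  assume "\<exists>H. is_GV H \<and> H \<subseteq> M"
  then obtain H where H: "fg_ideal H" "vop H = Rset" "H \<subseteq> M"
    unfolding is_GV_def by blast
  then have "vop H \<subseteq> tclos M" unfolding tclos_def by blast
  then show "tclos M = Rset"
    using H(2) tclos_subset_Rset[of M] by simp
qed

lemma PvMD_iff_GV:
  "PvMD TYPE('a::idom) \<longleftrightarrow>
     (\<forall>I :: 'a fract set. fg_ideal I \<and> I \<noteq> {0} \<longrightarrow> (\<exists>H. is_GV H \<and> H \<subseteq> setmult I (finv I)))"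
  unfolding PvMD_def tclos_eq_Rset_iff ..

subsection \<open>\<open>w\<close>-reductions in a P\<open>v\<close>MD\<close>

lemma setmult_setmult_finv_subset:
  assumes J: "Rsubmod J"
  shows "setmult (setmult J A) (finv A) \<subseteq> J"
proof (rule setmult_least[OF J])
  fix z \<beta> assume z: "z \<in> setmult J A" and \<beta>: "\<beta> \<in> finv A"
  have "setmult J A \<subseteq> {z. \<beta> * z \<in> J}"
  proof (rule setmult_least[OF Rsubmod_premult[OF J]])
    fix j \<alpha> assume "j \<in> J" "\<alpha> \<in> A"
    then have "(\<beta> * \<alpha>) * j \<in> J"
      using \<beta> Rsubmod_smult[OF J] unfolding finv_def colon_def by blast
    then show "j * \<alpha> \<in> {z. \<beta> * z \<in> J}" by (simp add: ac_simps)
  qed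
  then have "\<beta> * z \<in> J" using z by blast
  then show "z * \<beta> \<in> J" by (simp add: mult.commute)
qed

lemma wop_setmult_finv_mem:
  assumes J: "Rsubmod J" and x: "x \<in> wop (setmult J A)" and \<beta>: "\<beta> \<in> finv A"
  shows "x * \<beta> \<in> wop J"
proof -
  obtain G where G: "is_GV G" "\<forall>g\<in>G. x * g \<in> setmult J A"
    using x unfolding wop_iff by blast
  have "(x * g) * \<beta> \<in> J" if "g \<in> G" for g
    using setmult_mem[OF G(2)[rule_format, OF that] \<beta>] setmult_setmult_finv_subset[OF J] by blast
  then have "\<forall>g\<in>G. (x * \<beta>) * g \<in> J"
    by (simp add: ac_simps)
  then show ?thesis unfolding wop_iff using G(1) by blast
qed

text \<open>Cancellation of a \<open>t\<close>-invertible factor up to \<open>w\<close>-closure.\<close>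

lemma wop_subset_cancel:
  assumes J: "Rsubmod J" and H: "is_GV H" "H \<subseteq> setmult A (finv A)"
    and IA: "wop (setmult I A) \<subseteq> wop (setmult J A)"
  shows "wop I \<subseteq> wop J"
proof
  have trace_mult: "y * z \<in> wop J" if y: "y \<in> I" and z: "z \<in> setmult A (finv A)" for y z
  proof -
    have "setmult A (finv A) \<subseteq> {z. y * z \<in> wop J}"
    proof (rule setmult_least[OF Rsubmod_premult[OF Rsubmod_wop[OF J]]])
      fix \<alpha> \<beta> assume \<alpha>: "\<alpha> \<in> A" and \<beta>: "\<beta> \<in> finv A"
      have "y * \<alpha> \<in> wop (setmult J A)"
        using IA subset_wop[OF Rsubmod_setmult] setmult_mem[OF y \<alpha>] by blast
      then have "y * \<alpha> * \<beta> \<in> wop J"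
        using wop_setmult_finv_mem[OF J _ \<beta>] by blast
      then show "\<alpha> * \<beta> \<in> {z. y * z \<in> wop J}"
        by (simp add: mult.assoc)
    qed
    then show ?thesis using z by blast
  qed
  fix x assume "x \<in> wop I"
  then obtain G where G: "is_GV G" "\<forall>g\<in>G. x * g \<in> I" unfolding wop_iff by blast
  have "setmult G H \<subseteq> {z. x * z \<in> wop J}"
  proof (rule setmult_least[OF Rsubmod_premult[OF Rsubmod_wop[OF J]]])
    fix g h assume "g \<in> G" "h \<in> H"
    then have "(x * g) * h \<in> wop J" using trace_mult G(2) H(2) by blast
    then show "g * h \<in> {z. x * z \<in> wop J}" by (simp add: ac_simps)
  qed
  then have "x \<in> wop (wop J)"
    unfolding wop_iff using is_GV_setmult[OF G(1) H(1)] by blast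
  then show "x \<in> wop J" using wop_wop[OF J] by simp
qed

lemma w_basic_if_PvMD:
  assumes P: "PvMD TYPE('a::idom)" and I: "fg_ideal (I :: 'a fract set)" "I \<noteq> {0}"
  shows "w_basic I"
  unfolding w_basic_def
proof (intro allI impI)
  fix J assume "w_reduction J I"
  then obtain n where J: "int_ideal J" "J \<subseteq> I"
    and eq: "wop (setmult J (ipow I n)) = wop (ipow I (Suc n))"
    unfolding w_reduction_def by blast
  obtain a where a: "a \<in> I" "a \<noteq> 0"
    using I Rsubmod_0[OF fg_ideal_Rsubmod] by blast
  have "a ^ n \<in> ipow I n" "a ^ n \<noteq> 0"
    using power_mem_ipow[OF a(1)] a(2) by simp_all
  then have "ipow I n \<noteq> {0}" by blast
  then obtain H where H: "is_GV H" "H \<subseteq> setmult (ipow I n) (finv (ipow I n))"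
    using P[unfolded PvMD_iff_GV] fg_ideal_ipow[OF I(1)] by blast
  have "Rsubmod J" using J(1) unfolding int_ideal_def by blast
  then have "wop I \<subseteq> wop J"
    using wop_subset_cancel[OF _ H] equalityD2[OF eq] by simp
  then show "wop J = wop I" using wop_mono[OF J(2)] by blast
qed

subsection \<open>From \<open>w\<close>-basic ideals to \<open>t\<close>-invertibility\<close>

lemma wop_eq_if_reduction:
  assumes "w_basic I" "Rsubmod I" "int_ideal J" "J \<subseteq> I"
    and "setmult I I \<subseteq> setmult J I"
  shows "wop J = wop I"
proof -
  have "setmult J I = setmult I I"
    using assms(4,5) setmult_mono by blast
  then have "w_reduction J I"
    unfolding w_reduction_def using assms(2-4)
    by (intro conjI exI[of _ 1]) (simp_all add: setmult_Rset)
  then show ?thesis using assms(1) unfolding w_basic_def by blast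
qed

text \<open>Since \<open>(b)\<close> is a reduction of \<open>(b, be)\<close>, \<open>be\<close> lies in \<open>(b)\<^sub>w\<close>, i.e. \<open>e \<in> R\<^sub>w = R\<close>.\<close>

lemma quadratic_integral_mem_Rset:
  assumes basic: "w_basic (Rspan {b, b * e})"
    and b: "b \<in> Rset" "b \<noteq> 0" "b * e \<in> Rset" and h: "h \<in> Rset" and c: "c \<in> Rset"
    and eq: "e * e = h * e - c"
  shows "e \<in> Rset"
proof -
  define I where "I = Rspan {b, b * e}"
  define J where "J = Rspan {b}"
  have sI: "Rsubmod I" unfolding I_def by (rule Rsubmod_Rspan)
  have fgJ: "fg_ideal J" unfolding J_def using b(1) by (intro fg_idealI) auto
  have JI: "J \<subseteq> I" unfolding I_def J_def by (rule Rspan_mono) blast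
  have "b \<in> J" "b \<in> I" "b * e \<in> I"
    unfolding I_def J_def by (simp_all add: Rspan_base)
  then have gens: "b * b \<in> setmult J I" "b * (b * e) \<in> setmult J I"
    using setmult_mem by blast+
  have "b * e * (b * e) = (b * b) * (e * e)"
    by (simp add: ac_simps)
  also have "\<dots> = h * (b * (b * e)) - c * (b * b)"
    unfolding eq by (simp add: algebra_simps)
  also have "\<dots> \<in> setmult J I"
    using Rsubmod_diff[OF Rsubmod_setmult Rsubmod_smult[OF Rsubmod_setmult h gens(2)]
        Rsubmod_smult[OF Rsubmod_setmult c gens(1)]] .
  finally have "x * y \<in> setmult J I" if "x \<in> {b, b * e}" "y \<in> {b, b * e}" for x y
    using that gens by (auto simp: mult.commute)
  then have "setmult I I \<subseteq> setmult J I"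
    unfolding I_def by (rule setmult_Rspan_subset[OF Rsubmod_setmult])
  then have "wop J = wop I"
    by (rule wop_eq_if_reduction[OF basic[folded I_def] sI fg_ideal_int_ideal[OF fgJ] JI])
  moreover have "b * e \<in> wop I"
    using subset_wop[OF sI] \<open>b * e \<in> I\<close> by blast
  ultimately have "b * e \<in> wop J" by simp
  then obtain G where G: "is_GV G" "\<forall>g\<in>G. b * e * g \<in> Rspan {b}"
    unfolding wop_iff J_def by blast
  have "e * g \<in> Rset" if "g \<in> G" for g
  proof -
    have "b * e * g \<in> Rspan {b}" using G(2) that by blast
    then obtain r where r: "r \<in> Rset" "b * e * g = r * b"
      unfolding Rspan_singleton by auto
    then have "b * (e * g) = b * r" by (simp add: ac_simps)
    then show ?thesis using b(2) r(1) by simp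
  qed
  then have "e \<in> wop Rset" unfolding wop_iff using G(1) by blast
  then show "e \<in> Rset" by (simp add: wop_Rset)
qed

text \<open>\<open>u \<in> trace_gens F\<close> iff \<open>u \<in> R\<close> and \<open>u = k x\<close> with \<open>k \<in> F\<close>, \<open>x \<in> (Rspan F)\<^sup>-\<^sup>1\<close>.\<close>

definition trace_gens :: "'a::idom fract set \<Rightarrow> 'a fract set" where
  "trace_gens F = {u \<in> Rset. \<exists>k\<in>F. \<forall>l\<in>F. u * l / k \<in> Rset}"

lemma Rspan_trace_gens_subset:
  assumes "0 \<notin> F"
  shows "Rspan (trace_gens F) \<subseteq> setmult (Rspan F) (finv (Rspan F))"
proof (rule Rspan_least[OF Rsubmod_setmult], rule subsetI)
  fix u assume "u \<in> trace_gens F"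
  then obtain k where k: "k \<in> F" "\<forall>l\<in>F. u / k * l \<in> Rset"
    unfolding trace_gens_def by auto
  then have "u / k \<in> finv (Rspan F)"
    unfolding finv_def colon_def using mult_Rspan_mem[OF Rsubmod_Rset] by blast
  then have "k * (u / k) \<in> setmult (Rspan F) (finv (Rspan F))"
    using setmult_mem[OF Rspan_base[OF k(1)]] by blast
  then show "u \<in> setmult (Rspan F) (finv (Rspan F))"
    using k(1) assms by (metis nonzero_mult_div_cancel_left times_divide_eq_right)
qed

lemma trace_gens_singleton: "a \<noteq> 0 \<Longrightarrow> trace_gens {a} = Rset"
  unfolding trace_gens_def by auto

lemma mult_mem_trace_gens_insert:
  assumes u: "u \<in> Rset" "k \<in> F" "\<forall>l\<in>F. u * l / k \<in> Rset" and k: "k \<noteq> 0" and a: "a \<noteq> 0"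
    and v: "v \<in> trace_gens {k, a}"
  shows "u * v \<in> trace_gens (insert a F)"
proof -
  from v obtain m where v: "v \<in> Rset" "m = k \<or> m = a" "v * k / m \<in> Rset" "v * a / m \<in> Rset"
    unfolding trace_gens_def by blast
  have uv: "u * v \<in> Rset" using u(1) v(1) Rset_mult by blast
  have "u * v * l / m \<in> Rset" if l: "l \<in> insert a F" for l
  proof (cases "l = a")
    case True
    have "u * v * l / m = u * (v * a / m)" by (simp add: True mult.assoc)
    then show ?thesis using Rset_mult[OF u(1) v(4)] by (rule ssubst)
  next
    case False
    then have "u * l / k \<in> Rset" using l u(3) by simp
    then have "(u * l / k) * (v * k / m) \<in> Rset" using Rset_mult v(3) by blast
    moreover have "u * v * l / m = (u * l / k) * (v * k / m)"
      using k by (simp add: field_simps)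
    ultimately show ?thesis by (simp only:)
  qed
  moreover have "m \<in> insert a F" using v(2) u(2) by blast
  ultimately show ?thesis unfolding trace_gens_def using uv by blast
qed

context
  assumes fg_w_basic: "\<And>I :: 'a::idom fract set. fg_ideal I \<Longrightarrow> I \<noteq> {0} \<Longrightarrow> w_basic I"
begin

lemma GV_subset_Rspan_trace_gens_pair:
  fixes a b :: "'a fract"
  assumes a: "a \<in> Rset" "a \<noteq> 0" and b: "b \<in> Rset" "b \<noteq> 0"
  shows "\<exists>H. is_GV H \<and> H \<subseteq> Rspan (trace_gens {a, b})"
proof -
  define I where "I = Rspan {a * a, a * b, b * b}"
  define J where "J = Rspan {a * a, b * b}"
  have fgI: "fg_ideal I" and fgJ: "fg_ideal J" and JI: "J \<subseteq> I"
    unfolding I_def J_def using a(1) b(1) Rset_mult by (auto intro!: fg_idealI Rspan_mono)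
  have I: "a * a \<in> I" "a * b \<in> I" "b * b \<in> I"
    unfolding I_def by (simp_all add: Rspan_base)
  have J: "a * a \<in> J" "b * b \<in> J"
    unfolding J_def by (simp_all add: Rspan_base)
  have "x * y \<in> setmult J I" if "x \<in> {a * a, a * b, b * b}" "y \<in> {a * a, a * b, b * b}" for x y
  proof -
    have JI_mem: "a * a * z \<in> setmult J I" "b * b * z \<in> setmult J I" if "z \<in> I" for z
      using setmult_mem[OF J(1) that] setmult_mem[OF J(2) that] by simp_all
    have "a * b * (a * a) \<in> setmult J I" "a * b * (a * b) \<in> setmult J I"
      "a * b * (b * b) \<in> setmult J I"
      using JI_mem(1)[OF I(2)] JI_mem(1)[OF I(3)] JI_mem(2)[OF I(2)] by (simp_all add: ac_simps)
    moreover have "y \<in> I" using that(2) I by blast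
    ultimately show ?thesis using that JI_mem by auto
  qed
  then have "setmult I I \<subseteq> setmult J I"
    unfolding I_def by (rule setmult_Rspan_subset[OF Rsubmod_setmult])
  moreover have "I \<noteq> {0}" using I(1) a(2) by auto
  ultimately have "wop J = wop I"
    using wop_eq_if_reduction fg_w_basic fgI fg_ideal_Rsubmod fg_ideal_int_ideal fgJ JI by blast
  moreover have "a * b \<in> wop I"
    using subset_wop[OF fg_ideal_Rsubmod[OF fgI]] I(2) by blast
  ultimately have "a * b \<in> wop J" by simp
  then obtain H where H: "is_GV H" "\<forall>h\<in>H. a * b * h \<in> Rspan {a * a, b * b}"
    unfolding wop_iff J_def by blast
  have "h \<in> Rspan (trace_gens {a, b})" if hH: "h \<in> H" for h
  proof -
    have h: "h \<in> Rset" using H(1) hH fg_ideal_subset_Rset unfolding is_GV_def by blast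
    have "a * b * h \<in> {r * (a * a) + s * (b * b) | r s. r \<in> Rset \<and> s \<in> Rset}"
      using H(2) hH Rspan_pair_subset by blast
    then obtain r s where rs: "r \<in> Rset" "s \<in> Rset" "a * b * h = r * (a * a) + s * (b * b)"
      by auto
    define e where "e = r * a / b"
    define f where "f = s * b / a"
    have hef: "h = e + f"
      using rs(3) a(2) b(2) unfolding e_def f_def by (simp add: field_simps)
    have eq: "e * e = h * e - r * s"
      using a(2) b(2) unfolding hef e_def f_def by (simp add: field_simps)
    have be: "b * e \<in> Rset"
      unfolding e_def using b(2) Rset_mult[OF rs(1) a(1)] by simp
    have "fg_ideal (Rspan {b, b * e})"
      using b(1) be by (intro fg_idealI) auto
    moreover have "Rspan {b, b * e} \<noteq> {0}"
      using Rspan_base[of b "{b, b * e}"] b(2) by auto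
    ultimately have e: "e \<in> Rset"
      using quadratic_integral_mem_Rset[OF fg_w_basic b(1,2) be h Rset_mult[OF rs(1,2)] eq] by blast
    have f: "f \<in> Rset"
      using hef Rset_diff[OF h e] by simp
    have "e * a / a = e" "e * b / a = r" "f * a / b = s" "f * b / b = f"
      using a(2) b(2) unfolding e_def f_def by (simp_all add: field_simps)
    then have "\<forall>l\<in>{a, b}. e * l / a \<in> Rset" "\<forall>l\<in>{a, b}. f * l / b \<in> Rset"
      using e f rs(1,2) by simp_all
    then have "e \<in> trace_gens {a, b}" "f \<in> trace_gens {a, b}"
      unfolding trace_gens_def using e f by blast+
    then show ?thesis
      unfolding hef by (intro Rsubmod_add[OF Rsubmod_Rspan] Rspan_base)
  qed
  then show ?thesis using H(1) by blast
qed

text \<open>In the induction step, a GV-ideal for \<open>F\<close> times a common GV-subideal of those for the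
  pairs \<open>{k, a}\<close>, \<open>k \<in> F\<close>, is a GV-ideal for \<open>insert a F\<close>.\<close>

lemma GV_subset_Rspan_trace_gens:
  "finite F \<Longrightarrow> F \<noteq> {} \<Longrightarrow> F \<subseteq> Rset \<Longrightarrow> 0 \<notin> F \<Longrightarrow>
    \<exists>H. is_GV H \<and> H \<subseteq> Rspan (trace_gens (F :: 'a fract set))"
proof (induction F rule: finite_ne_induct)
  case (singleton a)
  then have "Rset \<subseteq> Rspan (trace_gens {a})"
    using trace_gens_singleton Rspan_superset by auto
  then show ?case using is_GV_Rset by blast
next
  case (insert a F)
  then obtain G where G: "is_GV G" "G \<subseteq> Rspan (trace_gens F)" by auto
  have a: "a \<in> Rset" "a \<noteq> 0" using insert.prems by auto
  have "\<forall>k\<in>F. \<exists>H. is_GV H \<and> H \<subseteq> Rspan (trace_gens {k, a})"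
    using GV_subset_Rspan_trace_gens_pair[OF _ _ a] insert.prems by auto
  then obtain Gk where Gk: "\<forall>k\<in>F. is_GV (Gk k) \<and> Gk k \<subseteq> Rspan (trace_gens {k, a})"
    by metis
  obtain Q where Q: "is_GV Q" "\<forall>k\<in>F. Q \<subseteq> Gk k"
    using GV_lower_bound[OF insert.hyps(1), of Gk] Gk by blast
  have "setmult G Q \<subseteq> Rspan (trace_gens (insert a F))"
  proof (rule setmult_least[OF Rsubmod_Rspan])
    fix g q assume g: "g \<in> G" and q: "q \<in> Q"
    have "q * u \<in> Rspan (trace_gens (insert a F))" if u: "u \<in> trace_gens F" for u
    proof -
      obtain k where k: "u \<in> Rset" "k \<in> F" "\<forall>l\<in>F. u * l / k \<in> Rset"
        using u unfolding trace_gens_def by blast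
      have "k \<noteq> 0" using k(2) insert.prems by auto
      then have "\<forall>v\<in>trace_gens {k, a}. u * v \<in> Rspan (trace_gens (insert a F))"
        using mult_mem_trace_gens_insert[OF k _ a(2)] Rspan_base by blast
      moreover have "q \<in> Rspan (trace_gens {k, a})" using Q(2) Gk k(2) q by blast
      ultimately have "u * q \<in> Rspan (trace_gens (insert a F))"
        using mult_Rspan_mem[OF Rsubmod_Rspan] by blast
      then show ?thesis by (simp add: mult.commute)
    qed
    then have "q * g \<in> Rspan (trace_gens (insert a F))"
      using mult_Rspan_mem[OF Rsubmod_Rspan] G(2) g by blast
    then show "g * q \<in> Rspan (trace_gens (insert a F))" by (simp add: mult.commute)
  qed
  then show ?case using is_GV_setmult[OF G(1) Q(1)] by blast
qed

lemma GV_subset_setmult_finv: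
  assumes I: "fg_ideal (I :: 'a fract set)" "I \<noteq> {0}"
  shows "\<exists>H. is_GV H \<and> H \<subseteq> setmult I (finv I)"
proof -
  obtain F where F: "finite F" "F \<subseteq> Rset" "I = Rspan F"
    using I(1) unfolding fg_ideal_def by blast
  then have IF: "I = Rspan (F - {0})" by (simp add: Rspan_Diff_zero)
  have "F - {0} \<noteq> {}"
  proof
    assume "F - {0} = {}"
    then show False using I(2) IF Rspan_empty by metis
  qed
  then obtain H where "is_GV H" "H \<subseteq> Rspan (trace_gens (F - {0}))"
    using GV_subset_Rspan_trace_gens[of "F - {0}"] F(1,2) by blast
  then show ?thesis
    using Rspan_trace_gens_subset[of "F - {0}"] unfolding IF by blast
qed

end

theorem theorem2p1:
  "PvMD TYPE('a::idom) \<longleftrightarrow>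
     (\<forall>I :: 'a fract set. fg_ideal I \<and> I \<noteq> {0} \<longrightarrow> w_basic I)"
proof
  assume "PvMD TYPE('a)"
  then show "\<forall>I :: 'a fract set. fg_ideal I \<and> I \<noteq> {0} \<longrightarrow> w_basic I"
    using w_basic_if_PvMD by blast
next
  assume "\<forall>I :: 'a fract set. fg_ideal I \<and> I \<noteq> {0} \<longrightarrow> w_basic I"
  then show "PvMD TYPE('a)"
    unfolding PvMD_iff_GV using GV_subset_setmult_finv by blast
qed

end
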